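(* Let $\Lambda$ be the $K3^{[n]}$-lattice ($n\ge2$), $\alpha\in\Lambda$ primitive isotropic, $Q_\alpha:=\alpha^\perp/\mathbb{Z}\alpha$, and let $Q_\alpha$ act on $\Omega_{\alpha^\perp}$ by $[z]\cdot\mathbb{C}x:=\mathbb{C}(x+(x,z)\alpha)$ for $x\in\alpha^\perp\otimes\mathbb{C}$ (denote the image group of this action by $g(Q_\alpha)$). For $\underline{\ell}\in\Omega_{Q_\alpha}$: (1) $g(Q_\alpha)$ has a dense orbit in the fiber $q^{-1}(\underline{\ell})$ if and only if $\underline{\ell}$ is non-special; (2) if $g(Q_\alpha)$ has a dense orbit in $q^{-1}(\underline{\ell})$, then every $g(Q_\alpha)$-orbit in $q^{-1}(\underline{\ell})$ is dense.
   Context: $\Omega_{\alpha^\perp}:=\{\ell\in\mathbb{P}(\Lambda\otimes\mathbb{C}):(\ell,\ell)=0,(\ell,\bar\ell)>0,(\ell,\alpha)=0\}$, $\Omega_{Q_\alpha}:=\{\ell\in\mathbb{P}(Q_\alpha\otimes\mathbb{C}):(\ell,\ell)=0,(\ell,\bar\ell)>0\}$, and $q:\Omega_{\alpha^\perp}\to\Omega_{Q_\alpha}$ sends a line to its image modulo $\mathbb{C}\alpha$; the fiber over $\underline{\ell}$ is $\mathbb{P}(\mathbb{C}\alpha+\mathbb{C}t)\setminus\{[\alpha]\}$ for any lift $t$. A period $\underline{\ell}\in\Omega_{Q_\alpha}$ is special if $(\underline{\ell}\oplus\bar{\underline{\ell}})\cap Q_\alpha\neq0$ (equivalently, the corresponding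 $K3$ period in $\Lambda_{k3}\cong$ $K3$ lattice, via $Q_\alpha\cong\bar v^\perp\subset\Lambda_{k3}$, is special), and non-special otherwise. The action is well defined in $Q_\alpha$ since $(x,\alpha)=0$. *)

theory Defs
  imports "HOL-Analysis.Analysis"
begin

text \<open>Lambda = U^3 (+) E8(-1)^2 (+) <-2(n-1)>, rank 23. Vectors are integer
  (resp. complex) functions on nat supported on indices 0..22.
  Indices 0..5: three hyperbolic planes U; 6..13 and 14..21: two copies of E8(-1);
  22: the generator of <-2(n-1)>.\<close>

definition E8_adj :: "nat \<Rightarrow> nat \<Rightarrow> bool" where
  "E8_adj i j \<longleftrightarrow> {i, j} \<in> {{0,2},{2,3},{3,4},{4,5},{5,6},{6,7},{1,3}}"

definition E8m :: "nat \<Rightarrow> nat \<Rightarrow> int" where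
  "E8m i j = (if i = j then -2 else if E8_adj i j then 1 else 0)"

definition gram :: "nat \<Rightarrow> nat \<Rightarrow> nat \<Rightarrow> int" where
  "gram n i j =
     (if i < 6 \<and> j < 6 then (if i div 2 = j div 2 \<and> i \<noteq> j then 1 else 0)
      else if 6 \<le> i \<and> i < 14 \<and> 6 \<le> j \<and> j < 14 then E8m (i - 6) (j - 6)
      else if 14 \<le> i \<and> i < 22 \<and> 14 \<le> j \<and> j < 22 then E8m (i - 14) (j - 14)
      else if i = 22 \<and> j = 22 then - 2 * (int n - 1)
      else 0)"

definition Lam :: "(nat \<Rightarrow> int) set" where
  "Lam = {x. \<forall>i\<ge>23. x i = 0}"

definition bil :: "nat \<Rightarrow> (nat \<Rightarrow> int) \<Rightarrow> (nat \<Rightarrow> int) \<Rightarrow> int" where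
  "bil n x y = (\<Sum>i<23. \<Sum>j<23. gram n i j * x i * y j)"

definition primitive :: "(nat \<Rightarrow> int) \<Rightarrow> bool" where
  "primitive a \<longleftrightarrow> a \<in> Lam \<and>
     (\<forall>k b. b \<in> Lam \<and> a = (\<lambda>i. k * b i) \<longrightarrow> k = 1 \<or> k = -1)"

definition LamC :: "(nat \<Rightarrow> complex) set" where
  "LamC = {x. \<forall>i\<ge>23. x i = 0}"

definition ofintv :: "(nat \<Rightarrow> int) \<Rightarrow> nat \<Rightarrow> complex" where
  "ofintv x = (\<lambda>i. of_int (x i))"

definition cnjv :: "(nat \<Rightarrow> complex) \<Rightarrow> nat \<Rightarrow> complex" where
  "cnjv x = (\<lambda>i. cnj (x i))"

definition bilC :: "nat \<Rightarrow> (nat \<Rightarrow> complex) \<Rightarrow> (nat \<Rightarrow> complex) \<Rightarrow> complex" where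
  "bilC n x y = (\<Sum>i<23. \<Sum>j<23. of_int (gram n i j) * x i * y j)"

text \<open>Points of P(Lambda (x) C) are complex lines (1-dim subspaces, including 0).\<close>
definition cline :: "(nat \<Rightarrow> complex) \<Rightarrow> (nat \<Rightarrow> complex) set" where
  "cline x = {(\<lambda>i. c * x i) | c. True}"

definition Plines :: "(nat \<Rightarrow> complex) set set" where
  "Plines = {cline x | x. x \<in> LamC \<and> x \<noteq> (\<lambda>i. 0)}"

text \<open>Quotient topology on P(Lambda (x) C) induced from Lambda (x) C minus 0
  (the latter carrying the Euclidean = product topology).\<close>
definition PT :: "(nat \<Rightarrow> complex) set topology" where
  "PT = topology (\<lambda>U. U \<subseteq> Plines \<and>
          openin (top_of_set (LamC - {\<lambda>i. 0})) {x \<in> LamC - {\<lambda>i. 0}. cline x \<in> U})"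

definition Omega_perp :: "nat \<Rightarrow> (nat \<Rightarrow> int) \<Rightarrow> (nat \<Rightarrow> complex) set set" where
  "Omega_perp n a = {cline x | x. x \<in> LamC \<and> x \<noteq> (\<lambda>i. 0) \<and> bilC n x x = 0 \<and>
      Im (bilC n x (cnjv x)) = 0 \<and> Re (bilC n x (cnjv x)) > 0 \<and> bilC n x (ofintv a) = 0}"

text \<open>Points of P(Q_alpha (x) C) are represented by their preimages in alpha-perp (x) C,
  i.e. by planes  C alpha + C t  with t in alpha-perp, t not in C alpha.\<close>
definition plane :: "(nat \<Rightarrow> int) \<Rightarrow> (nat \<Rightarrow> complex) \<Rightarrow> (nat \<Rightarrow> complex) set" where
  "plane a t = {(\<lambda>i. c * ofintv a i + d * t i) | c d. True}"

definition Omega_Q :: "nat \<Rightarrow> (nat \<Rightarrow> int) \<Rightarrow> (nat \<Rightarrow> complex) set set" where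
  "Omega_Q n a = {plane a t | t. t \<in> LamC \<and> bilC n t (ofintv a) = 0 \<and>
      t \<notin> cline (ofintv a) \<and> bilC n t t = 0 \<and>
      Im (bilC n t (cnjv t)) = 0 \<and> Re (bilC n t (cnjv t)) > 0}"

text \<open>q: a line goes to its image modulo C alpha (represented by line + C alpha).\<close>
definition qmap :: "(nat \<Rightarrow> int) \<Rightarrow> (nat \<Rightarrow> complex) set \<Rightarrow> (nat \<Rightarrow> complex) set" where
  "qmap a L = {(\<lambda>i. y i + c * ofintv a i) | y c. y \<in> L}"

definition fiber :: "nat \<Rightarrow> (nat \<Rightarrow> int) \<Rightarrow> (nat \<Rightarrow> complex) set \<Rightarrow> (nat \<Rightarrow> complex) set set" where
  "fiber n a W = {L \<in> Omega_perp n a. qmap a L = W}"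

text \<open>Special periods: (l (+) conj l) meets Q_alpha nontrivially; in terms of preimages
  in alpha-perp (x) C: some z in alpha-perp of Lambda, z not in Z alpha, lies in W + conj W.\<close>
definition special :: "nat \<Rightarrow> (nat \<Rightarrow> int) \<Rightarrow> (nat \<Rightarrow> complex) set \<Rightarrow> bool" where
  "special n a W \<longleftrightarrow> (\<exists>z. z \<in> Lam \<and> bil n z a = 0 \<and> z \<notin> range (\<lambda>k::int. (\<lambda>i. k * a i)) \<and>
      (\<exists>u v. u \<in> W \<and> v \<in> W \<and> ofintv z = (\<lambda>i. u i + cnj (v i))))"

definition act :: "nat \<Rightarrow> (nat \<Rightarrow> int) \<Rightarrow> (nat \<Rightarrow> int) \<Rightarrow> (nat \<Rightarrow> complex) set \<Rightarrow> (nat \<Rightarrow> complex) set" where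
  "act n a z L = {(\<lambda>i. y i + bilC n y (ofintv z) * ofintv a i) | y. y \<in> L}"

definition gQ :: "nat \<Rightarrow> (nat \<Rightarrow> int) \<Rightarrow> ((nat \<Rightarrow> complex) set \<Rightarrow> (nat \<Rightarrow> complex) set) set" where
  "gQ n a = (\<lambda>z. act n a z) ` {z \<in> Lam. bil n z a = 0}"

definition orbit :: "nat \<Rightarrow> (nat \<Rightarrow> int) \<Rightarrow> (nat \<Rightarrow> complex) set \<Rightarrow> (nat \<Rightarrow> complex) set set" where
  "orbit n a L = {g L | g. g \<in> gQ n a}"

definition dense_in :: "(nat \<Rightarrow> complex) set set \<Rightarrow> (nat \<Rightarrow> complex) set set \<Rightarrow> bool" where
  "dense_in S F \<longleftrightarrow> S \<subseteq> F \<and> (subtopology PT F) closure_of S = F"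

definition has_dense_orbit :: "nat \<Rightarrow> (nat \<Rightarrow> int) \<Rightarrow> (nat \<Rightarrow> complex) set \<Rightarrow> bool" where
  "has_dense_orbit n a W \<longleftrightarrow> (\<exists>L \<in> fiber n a W. dense_in (orbit n a L) (fiber n a W))"

end

theory Submission
  imports Defs
begin

text \<open>Fix a lift \<open>t \<in> \<alpha>\<^sup>\<bottom> \<otimes> \<complex>\<close> of the period, so that \<open>W = \<complex>\<alpha> + \<complex>t\<close>. The fibre of \<open>q\<close> over
  \<open>W\<close> is parametrised homeomorphically by \<open>c \<mapsto> \<complex>(t + c\<alpha>)\<close>, and \<open>[z]\<close> acts on it by the
  translation \<open>c \<mapsto> c + (t, z)\<close>. So every orbit is a translate of the additive subgroup
  \<open>H = {(t, z) | z \<in> \<alpha>\<^sup>\<bottom>}\<close> of \<open>\<complex>\<close>: one orbit is dense iff all are iff \<open>H\<close> is dense, and a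
  subgroup of \<open>\<complex>\<close> fails to be dense iff \<open>Re (\<mu> \<cdot>)\<close> is integer valued on it for some \<open>\<mu> \<noteq> 0\<close>.

  If \<open>z \<in> \<alpha>\<^sup>\<bottom> - \<int>\<alpha>\<close> equals \<open>u + cnj v\<close> with \<open>u, v \<in> W\<close>, then \<open>(z, w) = Re (\<mu> (t, w))\<close> for
  \<open>w \<in> \<alpha>\<^sup>\<bottom>\<close>, where \<open>\<mu>\<close> is the sum of the \<open>t\<close>-coefficients of \<open>u\<close> and \<open>v\<close>; and \<open>\<mu> = 0\<close> would
  force \<open>z \<in> \<int>\<alpha>\<close>. Conversely, given \<open>\<mu>\<close>, the real vector \<open>Re (\<mu> t)\<close> pairs integrally with
  \<open>\<alpha>\<^sup>\<bottom> \<inter> \<Lambda>\<close> and is therefore rational modulo \<open>\<real>\<alpha>\<close>. As \<open>2(n - 1)\<close> kills the discriminant group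
  of \<open>\<Lambda>\<close>, an integer multiple of \<open>Re (\<mu> t) - s\<alpha>\<close> is a lattice vector in \<open>\<alpha>\<^sup>\<bottom> \<inter> (W + cnj W)\<close>,
  and it is not in \<open>\<int>\<alpha>\<close> because \<open>(\<mu>t, cnj (\<mu>t)) \<noteq> 0\<close>.\<close>

section \<open>Additive subgroups of the real and complex numbers\<close>

definition add_subgroup :: "'a::ab_group_add set \<Rightarrow> bool" where
  "add_subgroup S \<longleftrightarrow> 0 \<in> S \<and> (\<forall>x\<in>S. \<forall>y\<in>S. x + y \<in> S) \<and> (\<forall>x\<in>S. - x \<in> S)"

lemma add_subgroup_diff: "add_subgroup S \<Longrightarrow> x \<in> S \<Longrightarrow> y \<in> S \<Longrightarrow> x - y \<in> S"
  unfolding add_subgroup_def by (metis diff_conv_add_uminus)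

lemma add_subgroup_of_int_mult:
  fixes S :: "'a::comm_ring_1 set"
  assumes S: "add_subgroup S" and x: "x \<in> S"
  shows "of_int k * x \<in> S"
proof (induction k rule: int_induct[where k = 0])
  case base
  then show ?case using S by (simp add: add_subgroup_def)
next
  case (step1 i)
  then show ?case using S x by (simp add: add_subgroup_def distrib_right)
next
  case (step2 i)
  then show ?case using add_subgroup_diff[OF S step2(2) x] by (simp add: left_diff_distrib)
qed

lemma add_subgroup_image:
  assumes H: "add_subgroup H" and f: "Modules.additive f"
  shows "add_subgroup (f ` H)"
  unfolding add_subgroup_def
proof (intro conjI ballI)
  show "0 \<in> f ` H" using H additive.zero[OF f] unfolding add_subgroup_def by force
next
  fix u v assume "u \<in> f ` H" "v \<in> f ` H"
  then show "u + v \<in> f ` H"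
    using H unfolding add_subgroup_def by (auto simp flip: additive.add[OF f])
next
  fix u assume "u \<in> f ` H"
  then show "- u \<in> f ` H"
    using H unfolding add_subgroup_def by (auto simp flip: additive.minus[OF f])
qed

lemma real_add_subgroup_least_positive:
  fixes S :: "real set"
  assumes S: "add_subgroup S" and \<eta>: "\<eta> > 0"
    and gap: "\<And>s. s \<in> S \<Longrightarrow> \<not> (0 < s \<and> s < \<eta>)"
    and pos: "s0 \<in> S" "s0 > 0"
  shows "\<exists>a\<in>S. a > 0 \<and> (\<forall>s\<in>S. s > 0 \<longrightarrow> a \<le> s)"
proof -
  define P where "P = {s\<in>S. s > 0}"
  have P: "P \<noteq> {}" "bdd_below P"
    using pos by (auto simp: P_def intro: bdd_belowI[of _ 0])
  have "Inf P \<in> P"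
  proof (rule ccontr)
    assume "Inf P \<notin> P"
    obtain p1 where p1: "p1 \<in> P" "p1 < Inf P + \<eta>"
      using cInf_less_iff[OF P] \<eta> by (metis less_add_same_cancel1)
    then have "Inf P < p1"
      using cInf_lower[OF p1(1) P(2)] \<open>Inf P \<notin> P\<close> by (metis order_le_less)
    then obtain p2 where p2: "p2 \<in> P" "p2 < p1"
      using cInf_less_iff[OF P] by auto
    have "p1 - p2 \<in> S" using p1 p2 add_subgroup_diff[OF S] by (auto simp: P_def)
    moreover have "0 < p1 - p2" "p1 - p2 < \<eta>" using p1 p2 cInf_lower[OF p2(1) P(2)] by auto
    ultimately show False using gap by blast
  qed
  then show ?thesis using cInf_lower[OF _ P(2)] by (auto simp: P_def)
qed

lemma real_add_subgroup_gap_imp_cyclic: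
  fixes S :: "real set"
  assumes S: "add_subgroup S" and \<eta>: "\<eta> > 0"
    and gap: "\<And>s. s \<in> S \<Longrightarrow> \<not> (0 < s \<and> s < \<eta>)"
  shows "\<exists>a>0. \<forall>s\<in>S. s / a \<in> \<int>"
proof (cases "\<exists>s0\<in>S. s0 > 0")
  case False
  have "S \<subseteq> {0}"
  proof
    fix s assume "s \<in> S"
    moreover have "- s \<in> S" using S \<open>s \<in> S\<close> by (simp add: add_subgroup_def)
    ultimately have "\<not> s > 0" "\<not> - s > 0" using False by blast+
    then show "s \<in> {0}" by simp
  qed
  then show ?thesis by (intro exI[of _ 1]) auto
next
  case True
  then obtain a where a: "a \<in> S" "a > 0" and least: "\<And>s. s \<in> S \<Longrightarrow> s > 0 \<Longrightarrow> a \<le> s"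
    using real_add_subgroup_least_positive[OF S \<eta> gap] by blast
  have "s / a \<in> \<int>" if s: "s \<in> S" for s
  proof -
    define k where "k = \<lfloor>s / a\<rfloor>"
    define r where "r = s - of_int k * a"
    have "r \<in> S" unfolding r_def using add_subgroup_diff[OF S s add_subgroup_of_int_mult[OF S a(1)]] .
    moreover have "0 \<le> r" "r < a"
    proof -
      have "of_int k * a \<le> s" "s < (of_int k + 1) * a"
        unfolding k_def using floor_divide_lower[OF a(2)] floor_divide_upper[OF a(2)] by auto
      then show "0 \<le> r" "r < a" unfolding r_def by (simp_all add: distrib_right)
    qed
    ultimately have "r = 0" using least[of r] by linarith
    then show ?thesis using a(2) by (simp add: r_def)
  qed
  then show ?thesis using a(2) by blast
qed

lemma real_add_subgroup_approx:
  fixes S :: "real set"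
  assumes S: "add_subgroup S" and small: "\<And>\<eta>. \<eta> > 0 \<Longrightarrow> \<exists>s\<in>S. 0 < s \<and> s < \<eta>"
    and e: "e > 0"
  shows "\<exists>s\<in>S. \<bar>s - x\<bar> < e"
proof -
  obtain s where s: "s \<in> S" "0 < s" "s < e" using small[OF e] by auto
  define k where "k = \<lfloor>x / s\<rfloor>"
  have "of_int k * s \<le> x" "x < (of_int k + 1) * s"
    unfolding k_def using floor_divide_lower[OF s(2)] floor_divide_upper[OF s(2)] by auto
  then have "\<bar>of_int k * s - x\<bar> < e" using s(3) by (simp add: distrib_right)
  then show ?thesis using add_subgroup_of_int_mult[OF S s(1), of k] by blast
qed

definition int_valued_functional :: "complex \<Rightarrow> complex set \<Rightarrow> bool" where
  "int_valued_functional \<mu> H \<longleftrightarrow> \<mu> \<noteq> 0 \<and> (\<forall>h\<in>H. Re (\<mu> * h) \<in> \<int>)"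

lemma int_valued_functional_not_dense:
  assumes "int_valued_functional \<mu> H"
  shows "closure H \<noteq> UNIV"
proof
  assume dense: "closure H = UNIV"
  have "closed ((\<lambda>w. Re (\<mu> * w)) -` \<int>)"
    by (intro closed_vimage closed_Ints continuous_intros)
  then have "closure H \<subseteq> (\<lambda>w. Re (\<mu> * w)) -` \<int>"
    using assms by (intro closure_minimal) (auto simp: int_valued_functional_def)
  then have "Re (\<mu> * (1 / (2 * \<mu>))) \<in> \<int>" using dense by blast
  moreover have "\<mu> * (1 / (2 * \<mu>)) = of_real (1/2)"
    using assms by (simp add: int_valued_functional_def)
  ultimately have "(1/2 :: real) \<in> \<int>" by (metis Re_complex_of_real)
  then show False using fraction_not_in_Ints[of 2 1, where 'a = real] by simp
qed

lemma complex_add_subgroup_Im_gap: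
  fixes H :: "complex set"
  assumes H: "add_subgroup H" and d: "d \<noteq> 0" and \<eta>: "\<eta> > 0"
    and gap: "\<And>h. h \<in> H \<Longrightarrow> \<not> (0 < Im (h / d) \<and> Im (h / d) < \<eta>)"
  shows "\<exists>\<mu>. int_valued_functional \<mu> H"
proof -
  let ?S = "(\<lambda>h. Im (h / d)) ` H"
  have "add_subgroup ?S"
    by (rule add_subgroup_image[OF H]) (simp add: Modules.additive_def add_divide_distrib)
  then have "\<exists>a>0. \<forall>s\<in>?S. s / a \<in> \<int>"
    by (rule real_add_subgroup_gap_imp_cyclic[OF _ \<eta>]) (use gap in blast)
  then obtain a where a: "a > 0" "\<And>h. h \<in> H \<Longrightarrow> Im (h / d) / a \<in> \<int>" by blast
  have "Re (- \<i> / (of_real a * d) * h) = Im (h / d) / a" for h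
  proof -
    have eq: "- \<i> / (of_real a * d) * h = (- \<i> * (h / d)) / of_real a" by (simp add: field_simps)
    have Re_i: "Re (- \<i> * z) = Im z" for z by simp
    show ?thesis unfolding eq Re_divide_of_real Re_i ..
  qed
  then have "int_valued_functional (- \<i> / (of_real a * d)) H"
    using a d unfolding int_valued_functional_def by simp
  then show ?thesis ..
qed

text \<open>Translating \<open>w\<close> by an integer multiple of \<open>d\<close> brings \<open>Re (w / d)\<close> into \<open>[-1/2, 1/2]\<close>;
  a small positive \<open>Im (w / d)\<close> would then give a nonzero element shorter than \<open>\<delta>\<close>.\<close>

lemma complex_add_subgroup_Im_gap_of_short:
  fixes H :: "complex set"
  assumes H: "add_subgroup H" and \<delta>: "\<And>h. h \<in> H \<Longrightarrow> h \<noteq> 0 \<Longrightarrow> \<delta> \<le> norm h"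
    and d: "d \<in> H" "d \<noteq> 0" "norm d < 2 * \<delta>"
  shows "\<exists>\<eta>>0. \<forall>h\<in>H. \<not> (0 < Im (h / d) \<and> Im (h / d) < \<eta>)"
proof -
  have "\<delta> > 0" using d(3) norm_ge_zero[of d] by linarith
  define \<eta> where "\<eta> = sqrt (\<delta>\<^sup>2 / (norm d)\<^sup>2 - 1/4)"
  have "(norm d)\<^sup>2 < (2 * \<delta>)\<^sup>2" using d by (intro power_strict_mono) auto
  then have "\<delta>\<^sup>2 / (norm d)\<^sup>2 - 1/4 > 0" using d(2) by (simp add: field_simps)
  then have \<eta>: "\<eta> > 0" "\<eta>\<^sup>2 = \<delta>\<^sup>2 / (norm d)\<^sup>2 - 1/4" by (simp_all add: \<eta>_def)
  have "\<not> (0 < Im (w / d) \<and> Im (w / d) < \<eta>)" if w: "w \<in> H" for w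
  proof
    assume Im: "0 < Im (w / d) \<and> Im (w / d) < \<eta>"
    define k where "k = \<lfloor>Re (w / d) + 1/2\<rfloor>"
    define w' where "w' = w - of_int k * d"
    have "w' \<in> H"
      unfolding w'_def using add_subgroup_diff[OF H w add_subgroup_of_int_mult[OF H d(1)]] .
    have Re': "Re (w' / d) = Re (w / d) - of_int k" and Im': "Im (w' / d) = Im (w / d)"
      using d(2) by (simp_all add: w'_def diff_divide_distrib)
    have "\<bar>Re (w' / d)\<bar> \<le> \<bar>1/2\<bar>" unfolding Re' k_def by linarith
    then have "(Re (w' / d))\<^sup>2 \<le> (1/2)\<^sup>2" unfolding abs_le_square_iff .
    moreover have "(Im (w' / d))\<^sup>2 < \<eta>\<^sup>2" unfolding Im' using Im by (intro power_strict_mono) auto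
    ultimately have "(norm (w' / d))\<^sup>2 < (\<delta> / norm d)\<^sup>2"
      unfolding cmod_power2 by (simp add: \<eta>(2) power_divide)
    then have "norm (w' / d) < \<delta> / norm d"
      by (rule power_less_imp_less_base) (use \<open>\<delta> > 0\<close> in auto)
    then have "norm w' < \<delta>" using d(2) by (simp add: norm_divide field_simps)
    moreover have "w' \<noteq> 0" using Im Im' by auto
    ultimately show False using \<delta>[OF \<open>w' \<in> H\<close>] by simp
  qed
  then show ?thesis using \<eta>(1) by blast
qed

lemma complex_add_subgroup_discrete:
  fixes H :: "complex set"
  assumes H: "add_subgroup H" and e: "e > 0"
    and sep: "\<And>h. h \<in> H \<Longrightarrow> h \<noteq> 0 \<Longrightarrow> e \<le> norm h"
  shows "\<exists>\<mu>. int_valued_functional \<mu> H"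
proof (cases "H \<subseteq> {0}")
  case True
  then have "int_valued_functional 1 H" by (auto simp: int_valued_functional_def)
  then show ?thesis ..
next
  case False
  define P where "P = norm ` (H - {0})"
  have P: "P \<noteq> {}" "bdd_below P" using False by (auto simp: P_def intro: bdd_belowI[of _ 0])
  define \<delta> where "\<delta> = Inf P"
  have "e \<le> \<delta>" unfolding \<delta>_def by (rule cInf_greatest[OF P(1)]) (auto simp: P_def intro!: sep)
  have \<delta>: "\<delta> \<le> norm h" if "h \<in> H" "h \<noteq> 0" for h
    unfolding \<delta>_def using that by (intro cInf_lower[OF _ P(2)]) (auto simp: P_def)
  have "\<exists>p\<in>P. p < 2 * \<delta>" using cInf_less_iff[OF P, of "2 * \<delta>"] \<open>e \<le> \<delta>\<close> e by (simp add: \<delta>_def)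
  then obtain d where d: "d \<in> H" "d \<noteq> 0" "norm d < 2 * \<delta>" by (auto simp: P_def)
  obtain \<eta> where "\<eta> > 0" "\<And>h. h \<in> H \<Longrightarrow> \<not> (0 < Im (h / d) \<and> Im (h / d) < \<eta>)"
    using complex_add_subgroup_Im_gap_of_short[OF H \<delta> d] by blast
  then show ?thesis using complex_add_subgroup_Im_gap[OF H d(2)] by blast
qed

lemma complex_add_subgroup_dense_of_small_independent:
  fixes H :: "complex set"
  assumes H: "add_subgroup H"
    and small: "\<And>e. e > 0 \<Longrightarrow> \<exists>u\<in>H. \<exists>v\<in>H. norm u < e \<and> norm v < e \<and> Im (v / u) \<noteq> 0"
  shows "closure H = UNIV"
proof -
  have "w \<in> closure H" for w
  proof (unfold closure_approachable, intro allI impI)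
    fix e :: real assume "e > 0"
    then obtain u v where uv: "u \<in> H" "v \<in> H" "norm u < e / 2" "norm v < e / 2" "Im (v / u) \<noteq> 0"
      using small[of "e / 2"] by auto
    then have "u \<noteq> 0" by auto
    define \<rho> where "\<rho> = v / u"
    define \<omega> where "\<omega> = w / u"
    define b where "b = Im \<omega> / Im \<rho>"
    define a where "a = Re \<omega> - b * Re \<rho>"
    have "\<omega> = of_real a + of_real b * \<rho>"
      using uv(5) by (simp add: complex_eq_iff a_def b_def \<rho>_def[symmetric])
    then have w: "w = of_real a * u + of_real b * v"
      using \<open>u \<noteq> 0\<close> by (simp add: \<omega>_def \<rho>_def field_simps)
    define h where "h = of_int \<lfloor>a\<rfloor> * u + of_int \<lfloor>b\<rfloor> * v"
    have "h \<in> H"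
      unfolding h_def using H add_subgroup_of_int_mult[OF H uv(1)] add_subgroup_of_int_mult[OF H uv(2)]
      by (simp add: add_subgroup_def)
    have "w - h = of_real (frac a) * u + of_real (frac b) * v"
      unfolding w h_def frac_def by (simp add: algebra_simps)
    then have "norm (w - h) \<le> norm (of_real (frac a) * u) + norm (of_real (frac b) * v)"
      by (simp only: norm_triangle_ineq)
    also have "\<dots> = frac a * norm u + frac b * norm v" by (simp add: norm_mult frac_ge_0)
    also have "\<dots> \<le> norm u + norm v"
      by (intro add_mono mult_left_le_one_le) (auto simp: frac_lt_1 less_imp_le)
    also have "\<dots> < e" using uv by simp
    finally show "\<exists>y\<in>H. dist y w < e" using \<open>h \<in> H\<close> by (auto simp: dist_norm norm_minus_commute)
  qed
  then show ?thesis by auto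
qed

lemma complex_add_subgroup_dense_of_line:
  fixes H :: "complex set"
  assumes H: "add_subgroup H" and d: "d \<noteq> 0"
    and on_line: "\<And>\<eta>. \<eta> > 0 \<Longrightarrow> \<exists>s. of_real s * d \<in> H \<and> 0 < s \<and> s < \<eta>"
    and off_line: "\<And>\<eta>. \<eta> > 0 \<Longrightarrow> \<exists>h\<in>H. 0 < Im (h / d) \<and> Im (h / d) < \<eta>"
  shows "closure H = UNIV"
proof -
  define S0 where "S0 = {s. of_real s * d \<in> H}"
  have S0: "add_subgroup S0" using H unfolding S0_def add_subgroup_def by (auto simp: distrib_right)
  let ?S = "(\<lambda>h. Im (h / d)) ` H"
  have S: "add_subgroup ?S"
    by (rule add_subgroup_image[OF H]) (simp add: Modules.additive_def add_divide_distrib)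
  have "w \<in> closure H" for w
  proof (unfold closure_approachable, intro allI impI)
    fix \<epsilon> :: real assume "\<epsilon> > 0"
    define e where "e = \<epsilon> / (2 * norm d)"
    have e: "e > 0" using \<open>\<epsilon> > 0\<close> d by (simp add: e_def)
    have "\<exists>s\<in>?S. \<bar>s - Im (w / d)\<bar> < e"
      by (rule real_add_subgroup_approx[OF S _ e]) (use off_line in blast)
    then obtain h where h: "h \<in> H" "\<bar>Im (h / d) - Im (w / d)\<bar> < e" by blast
    have "\<exists>s\<in>S0. \<bar>s - Re ((w - h) / d)\<bar> < e"
      by (rule real_add_subgroup_approx[OF S0 _ e]) (use on_line in \<open>auto simp: S0_def\<close>)
    then obtain s where s: "of_real s * d \<in> H" "\<bar>s - Re ((w - h) / d)\<bar> < e"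
      by (auto simp: S0_def)
    define h' where "h' = h + of_real s * d"
    have "h' \<in> H" using h(1) s(1) H unfolding h'_def add_subgroup_def by blast
    have "Re ((w - h') / d) = Re ((w - h) / d) - s" "Im ((w - h') / d) = Im (w / d) - Im (h / d)"
      using d by (simp_all add: h'_def diff_divide_distrib add_divide_distrib)
    then have "norm ((w - h') / d) < 2 * e" using cmod_le[of "(w - h') / d"] h(2) s(2) by linarith
    then have "dist h' w < \<epsilon>" using d by (simp add: dist_norm norm_minus_commute norm_divide e_def field_simps)
    then show "\<exists>y\<in>H. dist y w < \<epsilon>" using \<open>h' \<in> H\<close> by blast
  qed
  then show ?thesis by auto
qed

text \<open>Either \<open>H\<close> is discrete, or it has arbitrarily small elements; as \<open>H\<close> is not dense, the small
  ones eventually lie on a single real line \<open>\<real>d\<close>, on which \<open>H\<close> is then dense, and the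
  behaviour of \<open>Im (h / d)\<close> near \<open>0\<close> decides.\<close>

lemma complex_add_subgroup_not_dense_imp_functional:
  fixes H :: "complex set"
  assumes H: "add_subgroup H" and not_dense: "closure H \<noteq> UNIV"
  shows "\<exists>\<mu>. int_valued_functional \<mu> H"
proof (cases "\<exists>e>0. \<forall>h\<in>H. h \<noteq> 0 \<longrightarrow> e \<le> norm h")
  case True
  then show ?thesis using complex_add_subgroup_discrete[OF H] by blast
next
  case False
  then have small: "\<exists>h\<in>H. h \<noteq> 0 \<and> norm h < e" if "e > 0" for e
    using that by (auto simp: not_le)
  obtain e where e: "e > 0"
    and collinear: "\<And>u v. u \<in> H \<Longrightarrow> v \<in> H \<Longrightarrow> norm u < e \<Longrightarrow> norm v < e \<Longrightarrow> Im (v / u) = 0"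
    using complex_add_subgroup_dense_of_small_independent[OF H] not_dense by blast
  obtain d where d: "d \<in> H" "d \<noteq> 0" "norm d < e" using small[OF e] by auto
  have on_line: "\<exists>s. of_real s * d \<in> H \<and> 0 < s \<and> s < \<eta>" if "\<eta> > 0" for \<eta>
  proof -
    obtain h where h: "h \<in> H" "h \<noteq> 0" "norm h < min e (\<eta> * norm d)"
      using small[of "min e (\<eta> * norm d)"] \<open>\<eta> > 0\<close> e d(2) by auto
    define s where "s = Re (h / d)"
    have "Im (h / d) = 0" using collinear[OF d(1) h(1) d(3)] h(3) by simp
    then have hs: "h = of_real s * d"
      using d(2) unfolding s_def by (metis complex_is_Real_iff nonzero_eq_divide_eq of_real_Re)
    then have "\<bar>s\<bar> < \<eta>" "s \<noteq> 0" using h(2,3) d(2) by (auto simp: norm_mult field_simps)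
    moreover have "of_real (- s) * d \<in> H" using hs h(1) H by (simp add: add_subgroup_def)
    ultimately show ?thesis
    proof (cases "s > 0")
      case False
      then show ?thesis using \<open>of_real (- s) * d \<in> H\<close> \<open>\<bar>s\<bar> < \<eta>\<close> \<open>s \<noteq> 0\<close>
        by (intro exI[of _ "- s"]) auto
    qed (use hs h(1) in auto)
  qed
  show ?thesis
  proof (cases "\<exists>\<eta>>0. \<forall>h\<in>H. \<not> (0 < Im (h / d) \<and> Im (h / d) < \<eta>)")
    case True
    then show ?thesis using complex_add_subgroup_Im_gap[OF H d(2)] by blast
  next
    case False
    have "closure H = UNIV"
      by (rule complex_add_subgroup_dense_of_line[OF H d(2) on_line]) (use False in auto)
    then show ?thesis using not_dense by blast
  qed
qed

lemma complex_add_subgroup_dense_iff: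
  fixes H :: "complex set"
  assumes "add_subgroup H"
  shows "closure H = UNIV \<longleftrightarrow> (\<nexists>\<mu>. int_valued_functional \<mu> H)"
  using complex_add_subgroup_not_dense_imp_functional[OF assms] int_valued_functional_not_dense
  by blast

section \<open>The Gram matrix of the \<open>K3\<^sup>[\<^sup>n\<^sup>]\<close> lattice\<close>

lemma E8_adj_iff:
  "E8_adj i j \<longleftrightarrow> i = 0 \<and> j = 2 \<or> i = 2 \<and> j = 0 \<or> i = 2 \<and> j = 3 \<or> i = 3 \<and> j = 2 \<or>
     i = 3 \<and> j = 4 \<or> i = 4 \<and> j = 3 \<or> i = 4 \<and> j = 5 \<or> i = 5 \<and> j = 4 \<or> i = 5 \<and> j = 6 \<or>
     i = 6 \<and> j = 5 \<or> i = 6 \<and> j = 7 \<or> i = 7 \<and> j = 6 \<or> i = 1 \<and> j = 3 \<or> i = 3 \<and> j = 1"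
  unfolding E8_adj_def by (auto simp: doubleton_eq_iff)

lemma gram_sym: "gram n i j = gram n j i"
proof -
  have "E8m i j = E8m j i" for i j unfolding E8m_def E8_adj_def by (simp add: insert_commute)
  then show ?thesis unfolding gram_def by auto
qed

lemma gram_unimod_part: "i < 22 \<Longrightarrow> j < 22 \<Longrightarrow> gram n i j = gram 2 i j"
  unfolding gram_def by auto

text \<open>\<open>E8_inv\<close> is the inverse of the Gram matrix of \<open>E8(-1)\<close> in the labelling of \<open>E8_adj\<close>, and
  \<open>unimod_gram_inv\<close> the inverse of the Gram matrix of the unimodular part \<open>U\<^sup>3 \<oplus> E8(-1)\<^sup>2\<close>
  (indices below 22).\<close>

definition E8_inv :: "int list list" where
 "E8_inv =
   [[-4, -5, -7, -10, -8, -6, -4, -2],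
    [-5, -8, -10, -15, -12, -9, -6, -3],
    [-7, -10, -14, -20, -16, -12, -8, -4],
    [-10, -15, -20, -30, -24, -18, -12, -6],
    [-8, -12, -16, -24, -20, -15, -10, -5],
    [-6, -9, -12, -18, -15, -12, -8, -4],
    [-4, -6, -8, -12, -10, -8, -6, -3],
    [-2, -3, -4, -6, -5, -4, -3, -2]]"

definition unimod_gram_inv :: "nat \<Rightarrow> nat \<Rightarrow> int" where
  "unimod_gram_inv i j =
     (if i < 6 \<and> j < 6 then (if i div 2 = j div 2 \<and> i \<noteq> j then 1 else 0)
      else if 6 \<le> i \<and> i < 14 \<and> 6 \<le> j \<and> j < 14 then E8_inv ! (i - 6) ! (j - 6)
      else if 14 \<le> i \<and> i < 22 \<and> 14 \<le> j \<and> j < 22 then E8_inv ! (i - 14) ! (j - 14)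
      else 0)"

lemma unimod_gram_inv_gram:
  assumes "i < 22" "l < 22"
  shows "(\<Sum>k<22. unimod_gram_inv i k * gram n k l) = (if i = l then 1 else 0)"
proof -
  have "list_all (\<lambda>i. list_all (\<lambda>l.
      (\<Sum>k\<leftarrow>[0..<22]. unimod_gram_inv i k * gram 2 k l) = (if i = l then 1 else 0)) [0..<22]) [0..<22]"
    unfolding gram_def E8m_def E8_adj_iff unimod_gram_inv_def E8_inv_def by code_simp
  then have "(\<Sum>k<22. unimod_gram_inv i k * gram 2 k l) = (if i = l then 1 else 0)"
    using assms by (simp add: list_all_iff interv_sum_list_conv_sum_set_nat lessThan_atLeast0)
  then show ?thesis using assms gram_unimod_part[of _ l n] by simp
qed

definition gram_row :: "nat \<Rightarrow> (nat \<Rightarrow> 'a::comm_ring_1) \<Rightarrow> nat \<Rightarrow> 'a" where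
  "gram_row n x k = (\<Sum>l<23. of_int (gram n k l) * x l)"

lemma gram_row_ofintv: "gram_row n (ofintv x) k = of_int (gram_row n x k)"
  unfolding gram_row_def ofintv_def by simp

lemma gram_row_diff:
  "gram_row n (\<lambda>i. x i - s * y i) k = gram_row n x k - s * gram_row n y k"
  unfolding gram_row_def by (simp add: algebra_simps sum_subtractf sum_distrib_left)

text \<open>Since the last basis vector has square \<open>-2(n - 1)\<close>, \<open>gram_adj \<cdot> gram = 2(n - 1) \<cdot> Id\<close>:
  multiplying a vector of the dual lattice by \<open>2(n - 1)\<close> makes it integral.\<close>

definition gram_adj :: "nat \<Rightarrow> nat \<Rightarrow> nat \<Rightarrow> int" where
  "gram_adj n i j =
     (if i < 22 \<and> j < 22 then 2 * (int n - 1) * unimod_gram_inv i j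
      else if i = 22 \<and> j = 22 then -1 else 0)"

lemma gram_adj_gram:
  assumes "i < 23" "l < 23"
  shows "(\<Sum>k<23. gram_adj n i k * gram n k l) = (if i = l then 2 * (int n - 1) else 0)"
proof -
  have split: "(\<Sum>k<23. f k) = (\<Sum>k<22. f k) + f 22" for f :: "nat \<Rightarrow> int"
    using sum.lessThan_Suc[of f 22] by (simp add: eval_nat_numeral)
  have gram_22: "gram n k 22 = 0" "gram n 22 k = 0" if "k < 22" for k
    using that by (auto simp: gram_def)
  consider "i < 22" "l < 22" | "i < 22" "l = 22" | "i = 22" "l < 22" | "i = 22" "l = 22"
    using assms by linarith
  then show ?thesis
  proof cases
    case 1
    have "(\<Sum>k<22. gram_adj n i k * gram n k l) = 2 * (int n - 1) * (\<Sum>k<22. unimod_gram_inv i k * gram n k l)"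
      using 1 by (simp add: gram_adj_def sum_distrib_left mult.assoc)
    then show ?thesis using 1 unimod_gram_inv_gram[of i l n] by (simp add: split gram_adj_def)
  next
    case 2
    have "(\<Sum>k<22. gram_adj n i k * gram n k l) = 0"
      using 2 by (intro sum.neutral) (simp add: gram_22)
    then show ?thesis using 2 by (simp add: split gram_adj_def)
  next
    case 3
    have "(\<Sum>k<22. gram_adj n i k * gram n k l) = 0"
      using 3 by (intro sum.neutral) (simp add: gram_adj_def)
    then show ?thesis using 3 by (simp add: split gram_22)
  next
    case 4
    have "(\<Sum>k<22. gram_adj n i k * gram n k l) = 0"
      using 4 by (intro sum.neutral) (simp add: gram_adj_def)
    then show ?thesis using 4 by (simp add: split gram_adj_def gram_def)
  qed
qed

lemma gram_adj_row:
  fixes y :: "nat \<Rightarrow> 'a::comm_ring_1"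
  assumes "i < 23"
  shows "(\<Sum>k<23. of_int (gram_adj n i k) * gram_row n y k) = of_int (2 * (int n - 1)) * y i"
proof -
  have "(\<Sum>k<23. of_int (gram_adj n i k) * gram_row n y k)
      = (\<Sum>k<23. \<Sum>l<23. of_int (gram_adj n i k) * of_int (gram n k l) * y l)"
    unfolding gram_row_def by (simp only: sum_distrib_left mult.assoc)
  also have "\<dots> = (\<Sum>l<23. \<Sum>k<23. of_int (gram_adj n i k) * of_int (gram n k l) * y l)"
    by (rule sum.swap)
  also have "\<dots> = (\<Sum>l<23. of_int (\<Sum>k<23. gram_adj n i k * gram n k l) * y l)"
    by (simp only: sum_distrib_right of_int_sum of_int_mult)
  also have "\<dots> = (\<Sum>l<23. if i = l then of_int (2 * (int n - 1)) * y l else 0)"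
    using assms by (intro sum.cong refl) (simp add: gram_adj_gram)
  also have "\<dots> = of_int (2 * (int n - 1)) * y i"
    using assms by simp
  finally show ?thesis .
qed

lemma gram_adj_solve:
  fixes y :: "nat \<Rightarrow> 'a::comm_ring_1"
  assumes supp: "\<And>i. i \<ge> 23 \<Longrightarrow> y i = 0"
    and rows: "\<And>k. k < 23 \<Longrightarrow> of_int N * gram_row n y k = of_int (\<kappa> k)"
  shows "of_int (\<Sum>k<23. gram_adj n i k * \<kappa> k) = of_int (2 * (int n - 1)) * of_int N * y i"
proof (cases "i < 23")
  case True
  have "of_int (\<Sum>k<23. gram_adj n i k * \<kappa> k)
      = (\<Sum>k<23. of_int (gram_adj n i k) * (of_int N * gram_row n y k))"
    unfolding of_int_sum by (intro sum.cong refl) (simp add: rows)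
  also have "\<dots> = of_int N * (\<Sum>k<23. of_int (gram_adj n i k) * gram_row n y k)"
    by (simp add: sum_distrib_left mult_ac)
  also have "\<dots> = of_int N * (of_int (2 * (int n - 1)) * y i)"
    by (simp only: gram_adj_row[OF True])
  finally show ?thesis by (simp only: mult_ac)
next
  case False
  then show ?thesis using supp by (simp add: gram_adj_def)
qed

lemma bilC_sym: "bilC n x y = bilC n y x"
  unfolding bilC_def by (subst sum.swap) (simp add: gram_sym mult_ac)

lemma bilC_linear_left: "bilC n (\<lambda>i. a * x i + b * y i) z = a * bilC n x z + b * bilC n y z"
  unfolding bilC_def by (simp add: algebra_simps sum.distrib sum_distrib_left)

lemma bilC_linear3_left:
  "bilC n (\<lambda>i. a * x i + b * y i + c * w i) z = a * bilC n x z + b * bilC n y z + c * bilC n w z"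
  unfolding bilC_def by (simp add: algebra_simps sum.distrib sum_distrib_left)

lemma bilC_linear_right: "bilC n z (\<lambda>i. a * x i + b * y i) = a * bilC n z x + b * bilC n z y"
  using bilC_linear_left bilC_sym by metis

lemma bilC_scale_left: "bilC n (\<lambda>i. a * x i) z = a * bilC n x z"
  using bilC_linear_left[of n a x 0 x z] by simp

lemma bilC_scale_right: "bilC n z (\<lambda>i. a * x i) = a * bilC n z x"
  using bilC_scale_left bilC_sym by metis

lemma bilC_cnj: "cnj (bilC n x y) = bilC n (cnjv x) (cnjv y)"
  unfolding bilC_def cnjv_def by (simp add: cnj_sum)

lemma bilC_ofintv: "bilC n (ofintv x) (ofintv y) = of_int (bil n x y)"
  unfolding bilC_def bil_def ofintv_def by simp

lemma bilC_eq_sum_gram_row: "bilC n v x = (\<Sum>i<23. v i * gram_row n x i)"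
  unfolding bilC_def gram_row_def by (simp add: sum_distrib_left mult_ac)

lemma bilC_unit_left:
  assumes "k < 23"
  shows "bilC n (ofintv (\<lambda>i. if i = k then 1 else 0)) x = gram_row n x k"
proof -
  have "bilC n (ofintv (\<lambda>i. if i = k then 1 else 0)) x = (\<Sum>i<23. if i = k then gram_row n x i else 0)"
    unfolding bilC_eq_sum_gram_row by (rule sum.cong) (auto simp: ofintv_def)
  then show ?thesis using assms by simp
qed

lemma cnjv_ofintv: "cnjv (ofintv x) = ofintv x"
  unfolding cnjv_def ofintv_def by simp

lemma ofintv_linear:
  "ofintv (\<lambda>i. a * x i + b * y i) = (\<lambda>i. of_int a * ofintv x i + of_int b * ofintv y i)"
  by (simp add: ofintv_def fun_eq_iff)

lemma of_real_Re_eq: "complex_of_real (Re w) = (w + cnj w) / 2"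
  by (simp add: complex_add_cnj)

lemma bil_sym: "bil n x y = bil n y x"
  using bilC_sym[of n "ofintv x" "ofintv y"] by (simp add: bilC_ofintv)

lemma bil_linear_left: "bil n (\<lambda>i. a * x i + b * y i) w = a * bil n x w + b * bil n y w"
  unfolding bil_def by (simp add: algebra_simps sum.distrib sum_distrib_left)

lemma primitive_nonzero: "primitive \<alpha> \<Longrightarrow> \<alpha> \<noteq> (\<lambda>i. 0)"
proof
  assume "primitive \<alpha>" "\<alpha> = (\<lambda>i. 0)"
  then have "(\<lambda>i. 0::int) \<in> Lam \<and> \<alpha> = (\<lambda>i. 2 * (\<lambda>i. 0::int) i)" by (simp add: Lam_def)
  then have "(2::int) = 1 \<or> (2::int) = -1" using \<open>primitive \<alpha>\<close> unfolding primitive_def by blast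
  then show False by simp
qed

lemma primitive_multiple:
  assumes prim: "primitive \<alpha>" and z: "\<And>i. of_int (z i) = c * (of_int (\<alpha> i) :: complex)"
  shows "z \<in> range (\<lambda>k. \<lambda>i. k * \<alpha> i)"
proof -
  obtain i0 where "\<alpha> i0 \<noteq> 0" using primitive_nonzero[OF prim] by auto
  define p where "p = z i0"
  define q where "q = \<alpha> i0"
  have "q \<noteq> 0" using \<open>\<alpha> i0 \<noteq> 0\<close> by (simp add: q_def)
  have pq: "q * z i = p * \<alpha> i" for i
  proof -
    have "of_int (q * z i) = (of_int q * c) * (of_int (\<alpha> i) :: complex)" using z[of i] by simp
    also have "of_int q * c = (of_int p :: complex)" using z[of i0] by (simp add: p_def q_def)
    finally show ?thesis by (metis of_int_eq_iff of_int_mult)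
  qed
  define g where "g = gcd p q"
  have "g \<noteq> 0" using \<open>q \<noteq> 0\<close> by (simp add: g_def)
  obtain p' q' where pq': "p = p' * g" "q = q' * g" "coprime p' q'"
    using gcd_coprime_exists[of p q] \<open>g \<noteq> 0\<close> unfolding g_def by blast
  have pq2: "q' * z i = p' * \<alpha> i" for i
  proof -
    have "g * (q' * z i) = g * (p' * \<alpha> i)" using pq[of i] unfolding pq'(1,2) by (simp add: mult_ac)
    then show ?thesis using \<open>g \<noteq> 0\<close> by simp
  qed
  have "q' dvd \<alpha> i" for i
    using pq2[of i] pq'(3) by (metis coprime_commute coprime_dvd_mult_right_iff dvd_triv_left)
  then have "\<alpha> = (\<lambda>i. q' * (\<alpha> i div q'))" by (auto simp: fun_eq_iff)
  moreover have "(\<lambda>i. \<alpha> i div q') \<in> Lam" using prim by (simp add: primitive_def Lam_def)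
  ultimately have "q' = 1 \<or> q' = -1" using prim unfolding primitive_def by blast
  then have "q' * q' = 1" by auto
  have "z = (\<lambda>i. (q' * p') * \<alpha> i)"
  proof
    fix i
    have "z i = (q' * q') * z i" using \<open>q' * q' = 1\<close> by simp
    also have "\<dots> = q' * (p' * \<alpha> i)" using pq2[of i] by (simp only: mult.assoc)
    finally show "z i = (q' * p') * \<alpha> i" by (simp only: mult.assoc)
  qed
  then show ?thesis using range_eqI[of z "\<lambda>k i. k * \<alpha> i" "q' * p'"] by simp
qed

section \<open>Complex lines and the topology of \<open>\<bbbP>(\<Lambda> \<otimes> \<complex>)\<close>\<close>

lemma cline_self: "x \<in> cline x"
  unfolding cline_def by (rule CollectI, rule exI[of _ 1]) simp

lemma cline_memD: "y \<in> cline x \<Longrightarrow> \<exists>c. y = (\<lambda>i. c * x i)"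
  unfolding cline_def by auto

lemma scaled_mem_cline: "(\<lambda>i. c * x i) \<in> cline x"
  unfolding cline_def by blast

lemma cline_eqD: "cline x = cline y \<Longrightarrow> \<exists>e. x = (\<lambda>i. e * y i)"
  using cline_self[of x] cline_memD by metis

lemma cline_scale: "c \<noteq> 0 \<Longrightarrow> cline (\<lambda>i. c * x i) = cline x"
  unfolding cline_def
proof safe
  fix d
  show "\<exists>e. (\<lambda>i. d * (c * x i)) = (\<lambda>i. e * x i) \<and> True"
    by (intro exI[of _ "d * c"]) (simp add: mult.assoc)
next
  fix d assume "c \<noteq> 0"
  then show "\<exists>e. (\<lambda>i. d * x i) = (\<lambda>i. e * (c * x i)) \<and> True"
    by (intro exI[of _ "d / c"]) auto
qed

lemma act_cline: "act n a z (cline v) = cline (\<lambda>i. v i + bilC n v (ofintv z) * ofintv a i)"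
proof (rule set_eqI, rule iffI)
  fix x assume "x \<in> act n a z (cline v)"
  then obtain e where "x = (\<lambda>i. e * v i + bilC n (\<lambda>i. e * v i) (ofintv z) * ofintv a i)"
    unfolding act_def using cline_memD by blast
  then have "x = (\<lambda>i. e * (v i + bilC n v (ofintv z) * ofintv a i))"
    by (simp add: bilC_scale_left fun_eq_iff algebra_simps)
  then show "x \<in> cline (\<lambda>i. v i + bilC n v (ofintv z) * ofintv a i)"
    using scaled_mem_cline by simp
next
  fix x assume "x \<in> cline (\<lambda>i. v i + bilC n v (ofintv z) * ofintv a i)"
  then obtain e where "x = (\<lambda>i. e * (v i + bilC n v (ofintv z) * ofintv a i))"
    using cline_memD by blast
  then have x: "x = (\<lambda>i. e * v i + bilC n (\<lambda>i. e * v i) (ofintv z) * ofintv a i)"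
    by (simp add: bilC_scale_left fun_eq_iff algebra_simps)
  show "x \<in> act n a z (cline v)"
    unfolding act_def by (rule CollectI, rule exI[of _ "\<lambda>i. e * v i"]) (simp add: x scaled_mem_cline)
qed

lemma openin_PT:
  "openin PT U \<longleftrightarrow> U \<subseteq> Plines \<and> openin (top_of_set (LamC - {\<lambda>i. 0})) {x \<in> LamC - {\<lambda>i. 0}. cline x \<in> U}"
proof -
  let ?X = "LamC - {\<lambda>i. 0}"
  have "istopology (\<lambda>U. U \<subseteq> Plines \<and> openin (top_of_set ?X) {x \<in> ?X. cline x \<in> U})"
    unfolding istopology_def
  proof (rule conjI; intro allI impI)
    fix S T
    assume "S \<subseteq> Plines \<and> openin (top_of_set ?X) {x \<in> ?X. cline x \<in> S}"
      and "T \<subseteq> Plines \<and> openin (top_of_set ?X) {x \<in> ?X. cline x \<in> T}"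
    moreover have "{x \<in> ?X. cline x \<in> S \<inter> T} = {x \<in> ?X. cline x \<in> S} \<inter> {x \<in> ?X. cline x \<in> T}"
      by auto
    ultimately show "S \<inter> T \<subseteq> Plines \<and> openin (top_of_set ?X) {x \<in> ?X. cline x \<in> S \<inter> T}"
      by (auto intro: openin_Int)
  next
    fix K assume K: "\<forall>S\<in>K. S \<subseteq> Plines \<and> openin (top_of_set ?X) {x \<in> ?X. cline x \<in> S}"
    have "{x \<in> ?X. cline x \<in> \<Union>K} = (\<Union>S\<in>K. {x \<in> ?X. cline x \<in> S})" by auto
    moreover have "openin (top_of_set ?X) (\<Union>S\<in>K. {x \<in> ?X. cline x \<in> S})"
      using K by (intro openin_Union) auto
    ultimately show "\<Union>K \<subseteq> Plines \<and> openin (top_of_set ?X) {x \<in> ?X. cline x \<in> \<Union>K}"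
      using K by auto
  qed
  then show ?thesis unfolding PT_def by simp
qed

lemma topspace_PT: "topspace PT = Plines"
proof
  show "topspace PT \<subseteq> Plines" unfolding topspace_def using openin_PT by auto
  have "{x \<in> LamC - {\<lambda>i. 0}. cline x \<in> Plines} = LamC - {\<lambda>i. 0}" unfolding Plines_def by auto
  then have "openin PT Plines" unfolding openin_PT by simp
  then show "Plines \<subseteq> topspace PT" by (rule openin_subset)
qed

lemma continuous_on_coordinate [continuous_intros]: "continuous_on S (\<lambda>x::nat \<Rightarrow> complex. x i)"
  by (rule continuous_on_subset[OF continuous_on_product_coordinates]) simp

section \<open>The fibre over a fixed period\<close>

locale period_lift =
  fixes n :: nat and \<alpha> :: "nat \<Rightarrow> int" and t :: "nat \<Rightarrow> complex"
  assumes n_ge_2: "n \<ge> 2" and alpha_primitive: "primitive \<alpha>" and alpha_isotropic: "bil n \<alpha> \<alpha> = 0"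
    and t_LamC: "t \<in> LamC" and t_perp: "bilC n t (ofintv \<alpha>) = 0" and t_isotropic: "bilC n t t = 0"
    and t_positive: "Im (bilC n t (cnjv t)) = 0" "Re (bilC n t (cnjv t)) > 0"
begin

abbreviation A :: "nat \<Rightarrow> complex" where "A \<equiv> ofintv \<alpha>"

definition \<tau> :: complex where "\<tau> = bilC n t (cnjv t)"

definition lift :: "complex \<Rightarrow> nat \<Rightarrow> complex" where "lift c = (\<lambda>i. t i + c * A i)"

definition fib :: "complex \<Rightarrow> (nat \<Rightarrow> complex) set" where "fib c = cline (lift c)"

definition shift_group :: "complex set" where
  "shift_group = {bilC n t (ofintv z) | z. z \<in> Lam \<and> bil n z \<alpha> = 0}"

lemma alpha_Lam: "\<alpha> \<in> Lam"
  using alpha_primitive by (simp add: primitive_def)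

lemma A_LamC: "A \<in> LamC"
  using alpha_Lam by (simp add: Lam_def LamC_def ofintv_def)

lemma A_isotropic: "bilC n A A = 0"
  using alpha_isotropic by (simp add: bilC_ofintv)

lemma A_perp_t: "bilC n A t = 0"
  using t_perp bilC_sym[of n A t] by simp

lemma A_perp_cnj_t: "bilC n A (cnjv t) = 0"
  using bilC_cnj[of n A t] A_perp_t cnjv_ofintv[of \<alpha>] by simp

lemma A_perp_ofintv: "bil n z \<alpha> = 0 \<Longrightarrow> bilC n A (ofintv z) = 0"
  using bil_sym[of n \<alpha> z] by (simp add: bilC_ofintv)

lemma \<tau>_nonzero: "\<tau> \<noteq> 0"
  using t_positive by (auto simp: \<tau>_def)

lemma cnj_\<tau>: "cnj \<tau> = \<tau>"
  using t_positive by (simp add: \<tau>_def complex_eq_iff)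

text \<open>A coordinate where \<open>\<alpha>\<close> does not vanish; together with the pairing against
  \<open>cnjv t\<close> it recovers the parameter \<open>c\<close> of \<open>lift c\<close> from any point of \<open>fib c\<close>.\<close>

definition i0 :: nat where "i0 = (SOME i. i < 23 \<and> A i \<noteq> 0)"

lemma i0_spec: "i0 < 23" "A i0 \<noteq> 0"
proof -
  obtain i where i: "\<alpha> i \<noteq> 0" using primitive_nonzero[OF alpha_primitive] by auto
  then have "i < 23" using alpha_Lam unfolding Lam_def by (cases "i < 23") auto
  then have "\<exists>i. i < 23 \<and> A i \<noteq> 0" using i by (auto simp: ofintv_def)
  from someI_ex[OF this] show "i0 < 23" "A i0 \<noteq> 0" unfolding i0_def by auto
qed

definition t_coord :: "(nat \<Rightarrow> complex) \<Rightarrow> complex" where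
  "t_coord x = bilC n x (cnjv t) / \<tau>"

definition alpha_coord :: "(nat \<Rightarrow> complex) \<Rightarrow> complex" where
  "alpha_coord x = (x i0 - t_coord x * t i0) / A i0"

lemma t_coord_scale: "t_coord (\<lambda>i. e * x i) = e * t_coord x"
  by (simp add: t_coord_def bilC_scale_left)

lemma alpha_coord_scale: "alpha_coord (\<lambda>i. e * x i) = e * alpha_coord x"
  by (simp add: alpha_coord_def t_coord_scale field_simps)

lemma bilC_lift_left: "bilC n (lift c) z = bilC n t z + c * bilC n A z"
  using bilC_linear_left[of n 1 t c A z] by (simp add: lift_def)

lemma bilC_lift_right: "bilC n z (lift c) = bilC n z t + c * bilC n z A"
  using bilC_lift_left[of c z] bilC_sym[of n z] by simp

lemma t_coord_lift: "t_coord (lift c) = 1"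
  using \<tau>_nonzero by (simp add: t_coord_def bilC_lift_left A_perp_cnj_t \<tau>_def)

lemma alpha_coord_lift: "alpha_coord (lift c) = c"
  using i0_spec by (simp only: alpha_coord_def t_coord_lift) (simp add: lift_def)

lemma lift_nonzero: "lift c \<noteq> (\<lambda>i. 0)"
proof
  assume "lift c = (\<lambda>i. 0)"
  then have "t_coord (lift c) = t_coord (\<lambda>i. 0 * lift c i)" by simp
  then show False by (simp only: t_coord_scale t_coord_lift) simp
qed

lemma lift_LamC: "lift c \<in> LamC"
  using t_LamC A_LamC by (simp add: LamC_def lift_def)

lemma fib_mem_Omega_perp: "fib c \<in> Omega_perp n \<alpha>"
proof -
  have "cnjv (lift c) = (\<lambda>i. 1 * cnjv t i + cnj c * A i)"
    by (simp add: lift_def cnjv_def ofintv_def)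
  then have "bilC n z (cnjv (lift c)) = bilC n z (cnjv t) + cnj c * bilC n z A" for z
    using bilC_linear_right[of n z 1 "cnjv t" "cnj c" A] by simp
  then have "bilC n (lift c) (cnjv (lift c)) = \<tau>"
    by (simp add: bilC_lift_left t_perp A_perp_cnj_t A_isotropic \<tau>_def)
  moreover have "bilC n (lift c) (lift c) = 0" "bilC n (lift c) A = 0"
    by (simp_all add: bilC_lift_left bilC_lift_right t_isotropic t_perp A_perp_t A_isotropic)
  ultimately show ?thesis
    unfolding Omega_perp_def fib_def using lift_LamC lift_nonzero t_positive
    by (intro CollectI exI[of _ "lift c"]) (simp add: \<tau>_def)
qed

lemma inj_fib: "inj fib"
proof (rule injI)
  fix c c' assume "fib c = fib c'"
  then obtain e where e: "lift c = (\<lambda>i. e * lift c' i)" unfolding fib_def using cline_eqD by blast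
  have "t_coord (lift c) = e * t_coord (lift c')" using e t_coord_scale by metis
  then have "e = 1" by (simp add: t_coord_lift)
  have "alpha_coord (lift c) = e * alpha_coord (lift c')" using e alpha_coord_scale by metis
  then show "c = c'" using \<open>e = 1\<close> by (simp add: alpha_coord_lift)
qed

lemma fib_Plines: "fib c \<in> Plines"
  unfolding Plines_def fib_def using lift_LamC lift_nonzero by blast

lemma qmap_fib: "qmap \<alpha> (fib c) = plane \<alpha> t"
proof (rule set_eqI, rule iffI)
  fix x assume "x \<in> qmap \<alpha> (fib c)"
  then obtain e c1 where "x = (\<lambda>i. e * lift c i + c1 * A i)"
    unfolding qmap_def fib_def using cline_memD by blast
  then have "x = (\<lambda>i. (e * c + c1) * A i + e * t i)" by (simp add: lift_def fun_eq_iff algebra_simps)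
  then show "x \<in> plane \<alpha> t" unfolding plane_def by blast
next
  fix x assume "x \<in> plane \<alpha> t"
  then obtain c1 d where "x = (\<lambda>i. c1 * A i + d * t i)" unfolding plane_def by auto
  then have x: "x = (\<lambda>i. d * lift c i + (c1 - d * c) * A i)"
    by (simp add: lift_def fun_eq_iff algebra_simps)
  show "x \<in> qmap \<alpha> (fib c)" unfolding qmap_def fib_def
    by (rule CollectI, rule exI[of _ "\<lambda>i. d * lift c i"], rule exI[of _ "c1 - d * c"])
      (simp add: x scaled_mem_cline)
qed

lemma fiber_eq_range_fib: "fiber n \<alpha> (plane \<alpha> t) = range fib"
proof safe
  fix c
  show "fib c \<in> fiber n \<alpha> (plane \<alpha> t)"
    unfolding fiber_def using fib_mem_Omega_perp qmap_fib by simp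
next
  fix L assume L: "L \<in> fiber n \<alpha> (plane \<alpha> t)"
  then obtain x where x: "L = cline x" "Re (bilC n x (cnjv x)) > 0"
    and q: "qmap \<alpha> L = plane \<alpha> t"
    unfolding fiber_def Omega_perp_def by auto
  have "x \<in> qmap \<alpha> L" unfolding qmap_def x(1)
    by (rule CollectI, rule exI[of _ x], rule exI[of _ 0]) (simp add: cline_self)
  then obtain a b where ab: "x = (\<lambda>i. a * A i + b * t i)" using q unfolding plane_def by auto
  have "b \<noteq> 0"
  proof
    assume "b = 0"
    then have "x = (\<lambda>i. a * A i)" "cnjv x = (\<lambda>i. cnj a * A i)"
      using ab by (simp_all add: cnjv_def ofintv_def)
    then have "bilC n x (cnjv x) = 0" by (simp add: bilC_scale_left bilC_scale_right A_isotropic)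
    then show False using x(2) by simp
  qed
  then have "x = (\<lambda>i. b * lift (a / b) i)" using ab by (auto simp: lift_def field_simps)
  then have "L = fib (a / b)" using x(1) \<open>b \<noteq> 0\<close> by (simp add: fib_def cline_scale)
  then show "L \<in> range fib" by simp
qed

lemma act_fib:
  assumes "bil n z \<alpha> = 0"
  shows "act n \<alpha> z (fib c) = fib (c + bilC n t (ofintv z))"
proof -
  have "(\<lambda>i. lift c i + bilC n (lift c) (ofintv z) * A i) = lift (c + bilC n t (ofintv z))"
    by (simp add: bilC_lift_left A_perp_ofintv[OF assms]) (simp add: lift_def algebra_simps)
  then show ?thesis by (simp add: fib_def act_cline)
qed

lemma orbit_fib: "orbit n \<alpha> (fib c) = fib ` ((+) c ` shift_group)"
proof (rule set_eqI, rule iffI)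
  fix L assume "L \<in> orbit n \<alpha> (fib c)"
  then obtain z where z: "z \<in> Lam" "bil n z \<alpha> = 0" "L = act n \<alpha> z (fib c)"
    unfolding orbit_def gQ_def by auto
  then show "L \<in> fib ` ((+) c ` shift_group)"
    using act_fib unfolding shift_group_def by blast
next
  fix L assume "L \<in> fib ` ((+) c ` shift_group)"
  then obtain z where z: "z \<in> Lam" "bil n z \<alpha> = 0" "L = fib (c + bilC n t (ofintv z))"
    unfolding shift_group_def by auto
  then have "L = act n \<alpha> z (fib c)" "act n \<alpha> z \<in> gQ n \<alpha>"
    using act_fib unfolding gQ_def by auto
  then show "L \<in> orbit n \<alpha> (fib c)" unfolding orbit_def by blast
qed

lemma continuous_on_t_coord: "continuous_on S t_coord"
  unfolding t_coord_def bilC_def by (intro continuous_intros) (use \<tau>_nonzero in auto)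

lemma continuous_on_alpha_coord: "continuous_on S alpha_coord"
  unfolding alpha_coord_def by (intro continuous_intros continuous_on_t_coord) (use i0_spec in auto)

lemma continuous_map_fib: "continuous_map euclidean (subtopology PT (range fib)) fib"
proof (rule continuous_map_into_subtopology)
  show "fib \<in> topspace euclidean \<rightarrow> range fib" by auto
  show "continuous_map euclidean PT fib"
    unfolding continuous_map_def
  proof (intro conjI allI impI)
    show "fib \<in> topspace euclidean \<rightarrow> topspace PT" using fib_Plines topspace_PT by auto
  next
    fix U assume "openin PT U"
    then obtain T where T: "open T" "{x \<in> LamC - {\<lambda>i. 0}. cline x \<in> U} = (LamC - {\<lambda>i. 0}) \<inter> T"
      by (auto simp: openin_PT openin_open)
    have "fib c \<in> U \<longleftrightarrow> lift c \<in> T" for c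
    proof -
      have "lift c \<in> LamC - {\<lambda>i. 0}" using lift_LamC lift_nonzero by auto
      moreover from this have "lift c \<in> {x \<in> LamC - {\<lambda>i. 0}. cline x \<in> U} \<longleftrightarrow> lift c \<in> T"
        using T(2) by simp
      ultimately show ?thesis by (simp add: fib_def)
    qed
    then have "{c \<in> topspace euclidean. fib c \<in> U} = lift -` T" by auto
    moreover have "continuous_on UNIV lift"
      unfolding lift_def by (intro continuous_on_coordinatewise_then_product continuous_intros)
    ultimately show "openin euclidean {c \<in> topspace euclidean. fib c \<in> U}"
      using continuous_open_preimage[OF _ open_UNIV T(1)] by simp
  qed
qed

lemma openin_PT_coord_preimage:
  assumes V: "open V"
  shows "openin PT {L \<in> Plines. \<exists>x \<in> LamC - {\<lambda>i. 0}.
           L = cline x \<and> t_coord x \<noteq> 0 \<and> alpha_coord x / t_coord x \<in> V}" (is "openin PT ?U")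
proof -
  let ?X = "LamC - {\<lambda>i. 0}"
  have "{x \<in> ?X. cline x \<in> ?U} = ?X \<inter> ({x. t_coord x \<noteq> 0} \<inter> (\<lambda>x. alpha_coord x / t_coord x) -` V)"
  proof (rule set_eqI, rule iffI)
    fix x assume "x \<in> {x \<in> ?X. cline x \<in> ?U}"
    then obtain x' where x: "x \<in> ?X" "cline x = cline x'"
        "t_coord x' \<noteq> 0" "alpha_coord x' / t_coord x' \<in> V"
      by auto
    then obtain e where e: "x = (\<lambda>i. e * x' i)" using cline_eqD by blast
    then have "e \<noteq> 0" using x(1) by auto
    moreover have "t_coord x = e * t_coord x'" "alpha_coord x = e * alpha_coord x'"
      using e t_coord_scale alpha_coord_scale by auto
    ultimately show "x \<in> ?X \<inter> ({x. t_coord x \<noteq> 0} \<inter> (\<lambda>x. alpha_coord x / t_coord x) -` V)"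
      using x by auto
  next
    fix x assume x: "x \<in> ?X \<inter> ({x. t_coord x \<noteq> 0} \<inter> (\<lambda>x. alpha_coord x / t_coord x) -` V)"
    then have "cline x \<in> Plines" unfolding Plines_def by auto
    then show "x \<in> {x \<in> ?X. cline x \<in> ?U}" using x by auto
  qed
  moreover have "open ({x. t_coord x \<noteq> 0} \<inter> (\<lambda>x. alpha_coord x / t_coord x) -` V)"
  proof (rule continuous_open_preimage[OF _ _ V])
    show "continuous_on {x. t_coord x \<noteq> 0} (\<lambda>x. alpha_coord x / t_coord x)"
      by (intro continuous_intros continuous_on_t_coord continuous_on_alpha_coord) auto
    show "open {x. t_coord x \<noteq> 0}"
      using continuous_open_preimage[OF continuous_on_t_coord[of UNIV] open_UNIV, of "- {0}"]
      by (simp add: open_Compl vimage_def)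
  qed
  ultimately show ?thesis unfolding openin_PT openin_open by blast
qed

lemma open_map_fib: "open_map euclidean (subtopology PT (range fib)) fib"
  unfolding open_map_def
proof (intro allI impI)
  let ?X = "LamC - {\<lambda>i. 0}"
  fix V :: "complex set" assume "openin euclidean V"
  define U where "U = {L \<in> Plines. \<exists>x \<in> ?X. L = cline x \<and> t_coord x \<noteq> 0 \<and> alpha_coord x / t_coord x \<in> V}"
  have "openin PT U" unfolding U_def using \<open>openin euclidean V\<close> by (simp add: openin_PT_coord_preimage)
  moreover have "fib ` V = U \<inter> range fib"
  proof (rule set_eqI, rule iffI)
    fix L assume "L \<in> fib ` V"
    then obtain c where "c \<in> V" "L = fib c" by auto
    moreover have "lift c \<in> ?X" using lift_LamC lift_nonzero by auto
    ultimately show "L \<in> U \<inter> range fib" using fib_Plines unfolding U_def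
      by (auto simp: fib_def t_coord_lift alpha_coord_lift intro!: bexI[of _ "lift c"])
  next
    fix L assume L: "L \<in> U \<inter> range fib"
    then obtain c where c: "L = fib c" by auto
    from L obtain x where x: "L = cline x" "t_coord x \<noteq> 0" "alpha_coord x / t_coord x \<in> V"
      unfolding U_def by auto
    obtain e where "lift c = (\<lambda>i. e * x i)" using c x(1) cline_eqD unfolding fib_def by metis
    then have "t_coord (lift c) = e * t_coord x" "alpha_coord (lift c) = e * alpha_coord x"
      using t_coord_scale alpha_coord_scale by auto
    then have "c = alpha_coord x / t_coord x" using x(2) by (simp add: t_coord_lift alpha_coord_lift field_simps)
    then show "L \<in> fib ` V" using c x(3) by auto
  qed
  ultimately show "openin (subtopology PT (range fib)) (fib ` V)"
    unfolding openin_subtopology by blast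
qed

lemma homeomorphic_map_fib: "homeomorphic_map euclidean (subtopology PT (range fib)) fib"
proof (rule bijective_open_imp_homeomorphic_map[OF continuous_map_fib open_map_fib])
  show "fib ` topspace euclidean = topspace (subtopology PT (range fib))"
    using fib_Plines by (auto simp: topspace_PT)
  show "inj_on fib (topspace euclidean)" using inj_fib by (simp add: inj_on_def inj_def)
qed

lemma closure_of_fib_image: "subtopology PT (range fib) closure_of (fib ` S) = fib ` closure S"
  using homeomorphic_map_closure_of[OF homeomorphic_map_fib, of S] by simp

lemma dense_orbit_iff_shift_group_dense:
  "dense_in (orbit n \<alpha> (fib c)) (range fib) \<longleftrightarrow> closure shift_group = UNIV"
proof -
  have "dense_in (orbit n \<alpha> (fib c)) (range fib) \<longleftrightarrow> fib ` ((+) c ` closure shift_group) = fib ` UNIV"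
    unfolding dense_in_def orbit_fib closure_of_fib_image closure_translation by auto
  also have "\<dots> \<longleftrightarrow> (+) c ` closure shift_group = UNIV"
    using inj_fib by (simp add: inj_image_eq_iff)
  also have "\<dots> \<longleftrightarrow> closure shift_group = UNIV"
    using translation_galois[of UNIV c "closure shift_group"] surj_plus[of "- c"] by auto
  finally show ?thesis .
qed

lemma add_subgroup_shift_group: "add_subgroup shift_group"
proof -
  have comb: "of_int a * bilC n t (ofintv x) + of_int b * bilC n t (ofintv y) \<in> shift_group"
    if "x \<in> Lam" "y \<in> Lam" "bil n x \<alpha> = 0" "bil n y \<alpha> = 0" for a b x y
  proof -
    let ?z = "\<lambda>i. a * x i + b * y i"
    have "?z \<in> Lam" "bil n ?z \<alpha> = 0" using that by (simp_all add: Lam_def bil_linear_left)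
    moreover have "bilC n t (ofintv ?z) = of_int a * bilC n t (ofintv x) + of_int b * bilC n t (ofintv y)"
      by (simp only: ofintv_linear bilC_linear_right)
    ultimately show ?thesis unfolding shift_group_def by (intro CollectI exI[of _ ?z]) simp
  qed
  have zero: "(\<lambda>i. 0) \<in> Lam" "bil n (\<lambda>i. 0) \<alpha> = 0" by (simp_all add: Lam_def bil_def)
  show ?thesis unfolding add_subgroup_def
  proof (intro conjI ballI)
    show "0 \<in> shift_group" using comb[of "\<lambda>i. 0" "\<lambda>i. 0" 0 0] zero by simp
  next
    fix h1 h2 assume "h1 \<in> shift_group" "h2 \<in> shift_group"
    then show "h1 + h2 \<in> shift_group" using comb[of _ _ 1 1] unfolding shift_group_def by auto
  next
    fix h assume "h \<in> shift_group"
    then show "- h \<in> shift_group" using comb[of _ _ "-1" 0] unfolding shift_group_def by auto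
  qed
qed

lemma ofintv_combination_t_coeff_zero:
  assumes "ofintv z = (\<lambda>i. a * A i + b * t i - cnj b * cnjv t i)"
  shows "b = 0"
proof -
  have z: "ofintv z = (\<lambda>i. 1 * (a * A i + b * t i) + (- cnj b) * cnjv t i)"
    using assms by (simp add: fun_eq_iff)
  have "bilC n (cnjv t) (cnjv t) = 0" using bilC_cnj[of n t t] t_isotropic by simp
  then have "bilC n (ofintv z) (cnjv t) = b * \<tau>"
    unfolding z bilC_linear_left
    using bilC_linear_left[of n a A b t "cnjv t"] by (simp add: A_perp_cnj_t \<tau>_def)
  moreover have "bilC n (ofintv z) t = - cnj b * \<tau>"
    unfolding z bilC_linear_left using bilC_linear_left[of n a A b t t] bilC_sym[of n "cnjv t" t]
    by (simp add: A_perp_t t_isotropic \<tau>_def)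
  moreover have "cnj (bilC n (ofintv z) t) = bilC n (ofintv z) (cnjv t)"
    using bilC_cnj[of n "ofintv z" t] by (simp add: cnjv_ofintv)
  ultimately have "- b * \<tau> = b * \<tau>" using cnj_\<tau> by simp
  then show "b = 0" using \<tau>_nonzero by simp
qed

lemma int_valued_functional_of_special:
  assumes "special n \<alpha> (plane \<alpha> t)"
  shows "\<exists>\<mu>. int_valued_functional \<mu> shift_group"
proof -
  obtain z u v where z: "z \<in> Lam" "bil n z \<alpha> = 0" "z \<notin> range (\<lambda>k. \<lambda>i. k * \<alpha> i)"
    and uv: "u \<in> plane \<alpha> t" "v \<in> plane \<alpha> t" "ofintv z = (\<lambda>i. u i + cnj (v i))"
    using assms unfolding special_def by blast
  obtain a1 b1 a2 b2 where "u = (\<lambda>i. a1 * A i + b1 * t i)" "v = (\<lambda>i. a2 * A i + b2 * t i)"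
    using uv(1,2) unfolding plane_def by auto
  then have z_eq: "ofintv z = (\<lambda>i. (a1 + cnj a2) * A i + b1 * t i + cnj b2 * cnjv t i)"
    using uv(3) by (simp add: cnjv_def ofintv_def fun_eq_iff algebra_simps)
  show ?thesis
  proof (cases "b1 + b2 = 0")
    case True
    then have b2: "b2 = - b1" by (simp add: add_eq_0_iff)
    then have "ofintv z = (\<lambda>i. (a1 + cnj a2) * A i + b1 * t i - cnj b1 * cnjv t i)"
      using z_eq by simp
    then have "b1 = 0" by (rule ofintv_combination_t_coeff_zero)
    then have "of_int (z i) = (a1 + cnj a2) * of_int (\<alpha> i)" for i
      using z_eq b2 by (simp add: fun_eq_iff ofintv_def)
    then have "z \<in> range (\<lambda>k. \<lambda>i. k * \<alpha> i)" by (rule primitive_multiple[OF alpha_primitive])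
    with z(3) show ?thesis by contradiction
  next
    case False
    have "Re ((b1 + b2) * h) \<in> \<int>" if h: "h \<in> shift_group" for h
    proof -
      obtain w where w: "bil n w \<alpha> = 0" "h = bilC n t (ofintv w)"
        using h unfolding shift_group_def by auto
      have "bilC n (cnjv t) (ofintv w) = cnj h"
        using bilC_cnj[of n t "ofintv w"] w(2) by (simp add: cnjv_ofintv)
      then have "of_int (bil n z w) = b1 * h + cnj b2 * cnj h"
        unfolding bilC_ofintv[symmetric] z_eq bilC_linear3_left using w by (simp add: A_perp_ofintv)
      then have "of_int (bil n z w) = Re (b1 * h + cnj b2 * cnj h)"
        by (metis Re_complex_of_real of_real_of_int_eq)
      also have "\<dots> = Re ((b1 + b2) * h)" by (simp add: distrib_right)
      finally show ?thesis by (metis Ints_of_int)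
    qed
    then have "int_valued_functional (b1 + b2) shift_group"
      using False by (simp add: int_valued_functional_def)
    then show ?thesis ..
  qed
qed

definition Re_t :: "complex \<Rightarrow> nat \<Rightarrow> complex" where
  "Re_t \<mu> = (\<lambda>i. of_real (Re (\<mu> * t i)))"

lemma Re_t_eq: "Re_t \<mu> = (\<lambda>i. (\<mu> / 2) * t i + (cnj \<mu> / 2) * cnjv t i)"
  unfolding Re_t_def of_real_Re_eq cnjv_def by (simp add: fun_eq_iff field_simps)

lemma bilC_Re_t:
  assumes "cnjv v = v"
  shows "bilC n v (Re_t \<mu>) = of_real (Re (\<mu> * bilC n t v))"
proof -
  have "bilC n v (cnjv t) = cnj (bilC n t v)"
    using bilC_cnj[of n t v] assms bilC_sym[of n "cnjv t" v] by simp
  then have "bilC n v (Re_t \<mu>) = (\<mu> * bilC n t v + cnj (\<mu> * bilC n t v)) / 2"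
    unfolding Re_t_eq bilC_linear_right by (simp add: bilC_sym[of n v t] field_simps)
  then show ?thesis unfolding of_real_Re_eq .
qed

lemma Re_t_perp_A: "bilC n (Re_t \<mu>) A = 0"
  using bilC_Re_t[of A \<mu>] bilC_sym[of n A] t_perp by (simp add: cnjv_ofintv)

lemma Re_t_not_multiple_of_A:
  assumes "\<mu> \<noteq> 0"
  shows "Re_t \<mu> \<noteq> (\<lambda>i. \<rho> * A i)"
proof
  assume Re_t: "Re_t \<mu> = (\<lambda>i. \<rho> * A i)"
  define w where "w = (\<lambda>i. \<mu> * t i)"
  have "cnjv w = (\<lambda>i. (2 * \<rho>) * A i + (-1) * w i)"
  proof
    fix i
    have "w i + cnj (w i) = 2 * Re_t \<mu> i" unfolding w_def Re_t_def of_real_Re_eq by simp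
    then show "cnjv w i = (2 * \<rho>) * A i + (-1) * w i" by (simp add: cnjv_def Re_t algebra_simps)
  qed
  then have "bilC n w (cnjv w) = (2 * \<rho>) * bilC n w A + (-1) * bilC n w w"
    by (simp only: bilC_linear_right)
  also have "\<dots> = 0" by (simp add: w_def bilC_scale_left bilC_scale_right t_perp t_isotropic)
  finally have "bilC n w (cnjv w) = 0" .
  moreover have "bilC n w (cnjv w) = \<mu> * cnj \<mu> * \<tau>"
    by (simp add: w_def cnjv_def bilC_scale_left bilC_scale_right \<tau>_def[unfolded cnjv_def])
  ultimately show False using assms \<tau>_nonzero by simp
qed

lemma alpha_gram_row_nonzero: "\<exists>j<23. gram_row n \<alpha> j \<noteq> 0"
proof (rule ccontr)
  assume "\<not> (\<exists>j<23. gram_row n \<alpha> j \<noteq> 0)"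
  then have "2 * (int n - 1) * \<alpha> i = 0" if "i < 23" for i
    using gram_adj_row[OF that, of n \<alpha>] by simp
  then have "\<alpha> i = 0" for i
    using n_ge_2 alpha_Lam by (cases "i < 23") (auto simp: Lam_def)
  then show False using primitive_nonzero[OF alpha_primitive] by auto
qed

lemma bilC_Re_t_integral:
  assumes "int_valued_functional \<mu> shift_group" and "w \<in> Lam" "bil n w \<alpha> = 0"
  obtains c where "bilC n (ofintv w) (Re_t \<mu>) = of_int c"
proof -
  have "bilC n t (ofintv w) \<in> shift_group" using assms(2,3) unfolding shift_group_def by blast
  then obtain c where "Re (\<mu> * bilC n t (ofintv w)) = of_int c"
    using assms(1) unfolding int_valued_functional_def by (auto elim: Ints_cases)
  then show thesis using that bilC_Re_t[of "ofintv w" \<mu>] by (simp add: cnjv_ofintv)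
qed

text \<open>Pairing \<open>Re_t \<mu>\<close> with the integral vectors \<open>m\<^sub>j e\<^sub>k - m\<^sub>k e\<^sub>j \<in> \<alpha>\<^sup>\<bottom>\<close>, where \<open>m = gram_row n \<alpha>\<close>
  and \<open>m\<^sub>j \<noteq> 0\<close>, shows that after subtracting a multiple of \<open>\<alpha>\<close> its Gram rows lie in
  \<open>(1 / m\<^sub>j) \<int>\<close>.\<close>

lemma rows_of_int_valued_functional:
  assumes \<mu>: "int_valued_functional \<mu> shift_group"
  obtains N s \<kappa> where "N \<noteq> 0"
    "\<And>k. k < 23 \<Longrightarrow> of_int N * gram_row n (\<lambda>i. Re_t \<mu> i - s * A i) k = of_int (\<kappa> k)"
proof -
  obtain j where j: "j < 23" "gram_row n \<alpha> j \<noteq> 0" using alpha_gram_row_nonzero by blast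
  let ?m = "gram_row n \<alpha>" and ?\<phi> = "gram_row n (Re_t \<mu>)"
  have comb: "bilC n (ofintv (\<lambda>i. a * (if i = k then 1 else 0) + b * (if i = j then 1 else 0))) x
      = of_int a * gram_row n x k + of_int b * gram_row n x j" if "k < 23" for a b k x
    unfolding ofintv_linear bilC_linear_left using bilC_unit_left that j(1) by simp
  have "\<forall>k\<in>{..<23}. \<exists>c. of_int (?m j) * ?\<phi> k - of_int (?m k) * ?\<phi> j = of_int c"
  proof
    fix k :: nat assume "k \<in> {..<23}"
    then have k: "k < 23" by simp
    let ?z = "\<lambda>i. ?m j * (if i = k then 1 else 0) + (- ?m k) * (if i = j then 1 else 0)"
    have "?z \<in> Lam" using k j by (simp add: Lam_def)
    moreover have "of_int (bil n ?z \<alpha>) = (0 :: complex)"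
      unfolding bilC_ofintv[symmetric] comb[OF k] gram_row_ofintv by simp
    then have "bil n ?z \<alpha> = 0" by simp
    ultimately obtain c where "bilC n (ofintv ?z) (Re_t \<mu>) = of_int c"
      by (rule bilC_Re_t_integral[OF \<mu>])
    then show "\<exists>c. of_int (?m j) * ?\<phi> k - of_int (?m k) * ?\<phi> j = of_int c"
      unfolding comb[OF k] by (intro exI[of _ c]) simp
  qed
  then have "\<exists>\<kappa>. \<forall>k\<in>{..<23}. of_int (?m j) * ?\<phi> k - of_int (?m k) * ?\<phi> j = of_int (\<kappa> k)"
    by (rule bchoice)
  then obtain \<kappa> where \<kappa>: "\<And>k. k < 23 \<Longrightarrow> of_int (?m j) * ?\<phi> k - of_int (?m k) * ?\<phi> j = of_int (\<kappa> k)"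
    by auto
  define s where "s = ?\<phi> j / of_int (?m j)"
  have rows: "of_int (?m j) * gram_row n (\<lambda>i. Re_t \<mu> i - s * A i) k = of_int (\<kappa> k)" if "k < 23" for k
  proof -
    have "of_int (?m j) * gram_row n (\<lambda>i. Re_t \<mu> i - s * A i) k
        = of_int (?m j) * ?\<phi> k - of_int (?m k) * ?\<phi> j"
      unfolding gram_row_diff gram_row_ofintv s_def using j(2) by (simp add: field_simps)
    then show ?thesis using \<kappa>[OF that] by simp
  qed
  show thesis by (rule that[OF j(2) rows])
qed

lemma special_of_integral_rows:
  assumes \<mu>: "\<mu> \<noteq> 0" and N: "N \<noteq> 0"
    and rows: "\<And>k. k < 23 \<Longrightarrow> of_int N * gram_row n (\<lambda>i. Re_t \<mu> i - s * A i) k = of_int (\<kappa> k)"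
  shows "special n \<alpha> (plane \<alpha> t)"
proof -
  define M where "M = 2 * (int n - 1) * N"
  have "M \<noteq> 0" using n_ge_2 N by (simp add: M_def)
  define z where "z i = (\<Sum>k<23. gram_adj n i k * \<kappa> k)" for i
  have "Re_t \<mu> i - s * A i = 0" if "i \<ge> 23" for i
    using that t_LamC alpha_Lam by (simp add: Re_t_def LamC_def Lam_def ofintv_def)
  then have z_eq: "ofintv z = (\<lambda>i. of_int M * Re_t \<mu> i + (- of_int M * s) * A i)"
    using gram_adj_solve[OF _ rows] by (auto simp: fun_eq_iff ofintv_def z_def M_def algebra_simps)
  have "z \<in> Lam" by (simp add: Lam_def z_def gram_adj_def)
  moreover have "bil n z \<alpha> = 0"
  proof -
    have "of_int (bil n z \<alpha>) = bilC n (ofintv z) A" by (simp add: bilC_ofintv)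
    also have "\<dots> = 0" unfolding z_eq bilC_linear_left by (simp add: Re_t_perp_A A_isotropic)
    finally show ?thesis by simp
  qed
  moreover have "z \<notin> range (\<lambda>k. \<lambda>i. k * \<alpha> i)"
  proof
    assume "z \<in> range (\<lambda>k. \<lambda>i. k * \<alpha> i)"
    then obtain k where "ofintv z = (\<lambda>i. of_int k * A i)" by (auto simp: ofintv_def)
    then have "Re_t \<mu> = (\<lambda>i. (s + of_int k / of_int M) * A i)"
      using \<open>M \<noteq> 0\<close> unfolding z_eq by (simp add: fun_eq_iff field_simps)
    then show False using Re_t_not_multiple_of_A[OF \<mu>] by blast
  qed
  moreover
  define d where "d = of_int M * \<mu> / 2"
  have "ofintv z = (\<lambda>i. ((- of_int M * s) * A i + d * t i) + cnj (0 * A i + d * t i))"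
    unfolding z_eq Re_t_eq d_def by (simp add: fun_eq_iff cnjv_def field_simps)
  ultimately show ?thesis unfolding special_def plane_def by blast
qed

lemma special_of_int_valued_functional:
  assumes "int_valued_functional \<mu> shift_group"
  shows "special n \<alpha> (plane \<alpha> t)"
proof -
  obtain N s \<kappa> where "N \<noteq> 0"
    "\<And>k. k < 23 \<Longrightarrow> of_int N * gram_row n (\<lambda>i. Re_t \<mu> i - s * A i) k = of_int (\<kappa> k)"
    using rows_of_int_valued_functional[OF assms] by blast
  moreover have "\<mu> \<noteq> 0" using assms by (simp add: int_valued_functional_def)
  ultimately show ?thesis using special_of_integral_rows by blast
qed

lemma shift_group_dense_iff_not_special:
  "closure shift_group = UNIV \<longleftrightarrow> \<not> special n \<alpha> (plane \<alpha> t)"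
  using complex_add_subgroup_dense_iff[OF add_subgroup_shift_group]
    int_valued_functional_of_special special_of_int_valued_functional by blast

end

theorem lemma5p4:
  fixes n :: nat and \<alpha> :: "nat \<Rightarrow> int" and W :: "(nat \<Rightarrow> complex) set"
  assumes "n \<ge> 2"
    and "\<alpha> \<in> Lam" and "primitive \<alpha>" and "bil n \<alpha> \<alpha> = 0"
    and "W \<in> Omega_Q n \<alpha>"
  shows "(has_dense_orbit n \<alpha> W \<longleftrightarrow> \<not> special n \<alpha> W) \<and>
         (has_dense_orbit n \<alpha> W \<longrightarrow>
            (\<forall>L \<in> fiber n \<alpha> W. dense_in (orbit n \<alpha> L) (fiber n \<alpha> W)))"
proof -
  obtain t where W: "W = plane \<alpha> t" and t: "t \<in> LamC" "bilC n t (ofintv \<alpha>) = 0"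
      "bilC n t t = 0" "Im (bilC n t (cnjv t)) = 0" "Re (bilC n t (cnjv t)) > 0"
    using assms(5) unfolding Omega_Q_def by blast
  interpret period_lift n \<alpha> t
    using assms(1,3,4) t by unfold_locales
  have fiber: "fiber n \<alpha> W = range fib" using fiber_eq_range_fib W by simp
  have "dense_in (orbit n \<alpha> L) (fiber n \<alpha> W) \<longleftrightarrow> \<not> special n \<alpha> W" if L: "L \<in> fiber n \<alpha> W" for L
  proof -
    obtain c where "L = fib c" using L fiber by auto
    then show ?thesis
      using dense_orbit_iff_shift_group_dense shift_group_dense_iff_not_special
      unfolding W fiber_eq_range_fib by simp
  qed
  then show ?thesis unfolding has_dense_orbit_def fiber by blast
qed

end
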